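(* For every graph $G$ and every integer $\ell\ge 0$, a set $B\subseteq V(G)$ is an $\ell$-leaky forcing set of $G$ if and only if it is a specified $\ell$-leaky forcing set of $G$. In particular $\operatorname{Z}^s_{(\ell)}(G)=\operatorname{Z}_{(\ell)}(G)$.
   Context: All graphs are finite, simple and undirected. Zero forcing: a blue vertex $u$ with exactly one white neighbor $w$ may force $w$ (color it blue), written $u\to w$. A vertex leak is a vertex not allowed to perform any force; $B$ is an $\ell$-leaky forcing set if for every set of at most $\ell$ vertex leaks, exhaustively applying the forcing rule from initial blue set $B$ colors all of $V(G)$ blue. A specified leak is an ordered pair $v\to u$ indicating that $v$ is prohibited from forcing $u$; $B$ is a specified $\ell$-leaky forcing set if for every set of at most $\ell$ specified leaks, $B$ colors all of $V(G)$ blue without performing prohibited forces. $\operatorname{Z}_{(\ell)}(G)$ and $\operatorname{Z}^s_{(\ell)}(G)$ denote the minimum sizes of an $\ell$-leaky forcing set and a specified $\ell$-leaky forcing set, respectively. *)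

theory Defs
  imports Main
begin

definition simple_graph :: "'a set \<Rightarrow> ('a \<Rightarrow> 'a \<Rightarrow> bool) \<Rightarrow> bool" where
  "simple_graph V E \<longleftrightarrow> finite V \<and> (\<forall>u v. E u v \<longrightarrow> u \<in> V \<and> v \<in> V \<and> E v u \<and> u \<noteq> v)"

definition force_step :: "'a set \<Rightarrow> ('a \<Rightarrow> 'a \<Rightarrow> bool) \<Rightarrow> ('a \<Rightarrow> 'a \<Rightarrow> bool)
    \<Rightarrow> 'a set \<Rightarrow> 'a set \<Rightarrow> bool" where
  "force_step V E allowed S S' \<longleftrightarrow>
     (\<exists>u w. u \<in> S \<and> w \<in> V \<and> w \<notin> S \<and> E u w \<and> {x \<in> V. E u x} - S = {w}
            \<and> allowed u w \<and> S' = insert w S)"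

definition colors_all :: "'a set \<Rightarrow> ('a \<Rightarrow> 'a \<Rightarrow> bool) \<Rightarrow> ('a \<Rightarrow> 'a \<Rightarrow> bool) \<Rightarrow> 'a set \<Rightarrow> bool" where
  "colors_all V E allowed B \<longleftrightarrow>
     (\<forall>T. (force_step V E allowed)\<^sup>*\<^sup>* B T \<and> \<not> (\<exists>T'. force_step V E allowed T T') \<longrightarrow> V \<subseteq> T)"

definition leaky_forcing_set :: "'a set \<Rightarrow> ('a \<Rightarrow> 'a \<Rightarrow> bool) \<Rightarrow> nat \<Rightarrow> 'a set \<Rightarrow> bool" where
  "leaky_forcing_set V E l B \<longleftrightarrow> B \<subseteq> V \<and>
     (\<forall>L. L \<subseteq> V \<and> card L \<le> l \<longrightarrow> colors_all V E (\<lambda>u w. u \<notin> L) B)"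

text \<open>Specified l-leaky forcing set: robust against any set of at most l specified leaks
  (ordered pairs (v,u), meaning v may not force u).\<close>
definition spec_leaky_forcing_set :: "'a set \<Rightarrow> ('a \<Rightarrow> 'a \<Rightarrow> bool) \<Rightarrow> nat \<Rightarrow> 'a set \<Rightarrow> bool" where
  "spec_leaky_forcing_set V E l B \<longleftrightarrow> B \<subseteq> V \<and>
     (\<forall>S. S \<subseteq> V \<times> V \<and> card S \<le> l \<longrightarrow> colors_all V E (\<lambda>u w. (u, w) \<notin> S) B)"

definition leaky_Z :: "'a set \<Rightarrow> ('a \<Rightarrow> 'a \<Rightarrow> bool) \<Rightarrow> nat \<Rightarrow> nat" where
  "leaky_Z V E l = (LEAST k. \<exists>B. leaky_forcing_set V E l B \<and> card B = k)"

definition spec_leaky_Z :: "'a set \<Rightarrow> ('a \<Rightarrow> 'a \<Rightarrow> bool) \<Rightarrow> nat \<Rightarrow> nat" where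
  "spec_leaky_Z V E l = (LEAST k. \<exists>B. spec_leaky_forcing_set V E l B \<and> card B = k)"

end

theory Submission
  imports Defs
begin

text \<open>Fix a maximal run of forces under one kind of leak, ending in a stalled blue set \<open>T\<close>.
  Only the forces that are still available at \<open>T\<close> are blocked, and there are at most as many
  of them as leaks, since a vertex has at most one available force. Leaks of the other kind
  placed exactly on these forces stall the same set \<open>T\<close>; they do not disturb the run, because
  every force performed during the run was made by a vertex whose closed neighbourhood is
  entirely blue in \<open>T\<close>. Hence robustness against one kind of leak yields \<open>V \<subseteq> T\<close>.\<close>

definition available_forces :: "'a set \<Rightarrow> ('a \<Rightarrow> 'a \<Rightarrow> bool) \<Rightarrow> 'a set \<Rightarrow> ('a \<times> 'a) set" where
  "available_forces V E S = {(u, w). u \<in> S \<and> {x \<in> V. E u x} - S = {w}}"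

lemma available_forces_subset: "available_forces V E S \<subseteq> S \<times> V"
  unfolding available_forces_def by blast

lemma saturated_not_available:
  assumes "{x \<in> V. E u x} \<subseteq> T"
  shows "(u, w) \<notin> available_forces V E T"
  using assms unfolding available_forces_def by blast

lemma inj_on_fst_available_forces: "inj_on fst (available_forces V E S)"
  by (rule inj_onI) (auto simp: available_forces_def)

lemma force_step_iff:
  "force_step V E A S S' \<longleftrightarrow> (\<exists>(u, w) \<in> available_forces V E S. A u w \<and> S' = insert w S)"
  unfolding force_step_def available_forces_def by blast

lemma stalled_iff:
  "(\<nexists>S'. force_step V E A S S') \<longleftrightarrow> (\<forall>(u, w) \<in> available_forces V E S. \<not> A u w)"
  by (auto simp: force_step_iff)

lemma force_run_transfer:
  assumes "(force_step V E A)\<^sup>*\<^sup>* B S" and "S \<subseteq> T"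
    and "\<And>u w. A u w \<Longrightarrow> {x \<in> V. E u x} \<subseteq> T \<Longrightarrow> A' u w"
  shows "(force_step V E A')\<^sup>*\<^sup>* B S"
  using assms(1,2)
proof (induction rule: rtranclp_induct)
  case base
  then show ?case by simp
next
  case (step S S')
  then obtain u w where uw: "(u, w) \<in> available_forces V E S" "A u w" "S' = insert w S"
    by (auto simp: force_step_iff)
  have "{x \<in> V. E u x} \<subseteq> T"
    using uw step.prems unfolding available_forces_def by blast
  then have "force_step V E A' S S'"
    using uw assms(3) unfolding force_step_iff by blast
  moreover have "S \<subseteq> T" using step.prems uw(3) by blast
  ultimately show ?case using step.IH by (meson rtranclp.rtrancl_into_rtrancl)
qed

lemma colors_all_transfer:
  assumes robust: "colors_all V E A' B"
    and run: "(force_step V E A)\<^sup>*\<^sup>* B T" and stalled: "\<nexists>T'. force_step V E A T T'"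
    and saturated: "\<And>u w. A u w \<Longrightarrow> {x \<in> V. E u x} \<subseteq> T \<Longrightarrow> A' u w"
    and blocked: "\<And>u w. (u, w) \<in> available_forces V E T \<Longrightarrow> A' u w \<Longrightarrow> A u w"
  shows "V \<subseteq> T"
proof -
  have "(force_step V E A')\<^sup>*\<^sup>* B T"
    using force_run_transfer[OF run order_refl saturated] .
  moreover have "\<nexists>T'. force_step V E A' T T'"
    using stalled blocked unfolding stalled_iff by blast
  ultimately show ?thesis
    using robust unfolding colors_all_def by blast
qed

lemma leaky_imp_spec_leaky:
  assumes "finite V" and leaky: "leaky_forcing_set V E l B"
  shows "spec_leaky_forcing_set V E l B"
  unfolding spec_leaky_forcing_set_def
proof (intro conjI allI impI)
  show "B \<subseteq> V" using leaky unfolding leaky_forcing_set_def by blast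
  fix S assume S: "S \<subseteq> V \<times> V \<and> card S \<le> l"
  show "colors_all V E (\<lambda>u w. (u, w) \<notin> S) B"
    unfolding colors_all_def
  proof (intro allI impI)
    fix T
    assume T: "(force_step V E (\<lambda>u w. (u, w) \<notin> S))\<^sup>*\<^sup>* B T \<and>
      \<not> (\<exists>T'. force_step V E (\<lambda>u w. (u, w) \<notin> S) T T')"
    define L where "L = fst ` (S \<inter> available_forces V E T)"
    have "finite S" using S \<open>finite V\<close> by (meson finite_SigmaI finite_subset)
    then have "card L \<le> l"
      unfolding L_def using S by (meson card_image_le card_mono finite_Int inf_le1 le_trans)
    moreover have "L \<subseteq> V" unfolding L_def using S by auto
    ultimately have "colors_all V E (\<lambda>u w. u \<notin> L) B"
      using leaky unfolding leaky_forcing_set_def by blast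
    then show "V \<subseteq> T"
    proof (rule colors_all_transfer[where A = "\<lambda>u w. (u, w) \<notin> S"])
      show "u \<notin> L" if "{x \<in> V. E u x} \<subseteq> T" for u
        using saturated_not_available[of V E u T, OF that] unfolding L_def by force
      show "(u, w) \<notin> S" if "(u, w) \<in> available_forces V E T" "u \<notin> L" for u w
        using that unfolding L_def by force
    qed (use T in auto)
  qed
qed

lemma spec_leaky_imp_leaky:
  assumes "finite V" and spec: "spec_leaky_forcing_set V E l B"
  shows "leaky_forcing_set V E l B"
  unfolding leaky_forcing_set_def
proof (intro conjI allI impI)
  show "B \<subseteq> V" using spec unfolding spec_leaky_forcing_set_def by blast
  fix L assume L: "L \<subseteq> V \<and> card L \<le> l"
  show "colors_all V E (\<lambda>u w. u \<notin> L) B"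
    unfolding colors_all_def
  proof (intro allI impI)
    fix T
    assume T: "(force_step V E (\<lambda>u w. u \<notin> L))\<^sup>*\<^sup>* B T \<and>
      \<not> (\<exists>T'. force_step V E (\<lambda>u w. u \<notin> L) T T')"
    define S where "S = available_forces V E T \<inter> L \<times> UNIV"
    have "finite L" using L \<open>finite V\<close> by (meson finite_subset)
    moreover have "inj_on fst S"
      unfolding S_def using inj_on_fst_available_forces by (rule inj_on_subset) blast
    moreover have "fst ` S \<subseteq> L" unfolding S_def by auto
    ultimately have "card S \<le> l"
      using L by (metis card_image card_mono le_trans)
    moreover have "S \<subseteq> V \<times> V"
      unfolding S_def using L available_forces_subset by blast
    ultimately have "colors_all V E (\<lambda>u w. (u, w) \<notin> S) B"
      using spec unfolding spec_leaky_forcing_set_def by blast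
    then show "V \<subseteq> T"
    proof (rule colors_all_transfer[where A = "\<lambda>u w. u \<notin> L"])
      show "(u, w) \<notin> S" if "{x \<in> V. E u x} \<subseteq> T" for u w
        using saturated_not_available[of V E u T, OF that] unfolding S_def by blast
    qed (use T in \<open>auto simp: S_def\<close>)
  qed
qed

theorem corollary3p2:
  fixes V :: "'a set" and E :: "'a \<Rightarrow> 'a \<Rightarrow> bool" and l :: nat
  assumes "simple_graph V E"
  shows "(\<forall>B. B \<subseteq> V \<longrightarrow> (leaky_forcing_set V E l B \<longleftrightarrow> spec_leaky_forcing_set V E l B))
         \<and> spec_leaky_Z V E l = leaky_Z V E l"
proof -
  have "finite V" using assms unfolding simple_graph_def by blast
  then have "leaky_forcing_set V E l = spec_leaky_forcing_set V E l"
    using leaky_imp_spec_leaky spec_leaky_imp_leaky by blast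
  then show ?thesis unfolding spec_leaky_Z_def leaky_Z_def by simp
qed

end
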